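(* Let $(\alpha_j)_{j\geq 1}$ be a sequence of pairwise distinct complex numbers and let $(P_k)_{k\geq 0}$ be the polynomials defined in the context. Let $(a_k)_{k\geq0}$ and $(b_k)_{k\geq 0}$ be complex sequences such that both series $\sum_{k=0}^\infty a_k P_k(z)$ and $\sum_{k=0}^\infty b_k P_k(z)$ converge uniformly on compact subsets of $\mathbb{C}$. If $\sum_{k=0}^{\infty} a_k P_k(z) = \sum_{k=0}^{\infty} b_k P_k(z)$ for all $z \in \mathbb{C}$, then $a_k = b_k$ for every $k \geq 0$.
   Context: Every integer $n \geq 1$ can be written uniquely as $n = (1+2+\cdots+m_n) + j_n$ with integers $m_n \geq 0$ and $1 \leq j_n \leq m_n+1$. Define polynomials by $P_0(z) = 1$ and recursively $P_n(z) = (z - \alpha_{j_n}) P_{n-1}(z)$ for $n \geq 1$ (so $\deg P_n = n$; e.g. $P_1=(z-\alpha_1)$, $P_2=(z-\alpha_1)^2$, $P_3=(z-\alpha_1)^2(z-\alpha_2)$, $P_4=(z-\alpha_1)^3(z-\alpha_2)$). *)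

theory Defs
  imports "HOL-Analysis.Analysis" "HOL-Computational_Algebra.Polynomial"
begin

definition tri :: "nat \<Rightarrow> nat" where
  "tri m = m * (m + 1) div 2"

text \<open>For n \<ge> 1: the unique m_n \<ge> 0 with tri m_n < n \<le> tri (m_n + 1),
  and j_n = n - tri m_n, so that 1 \<le> j_n \<le> m_n + 1.\<close>
definition m_idx :: "nat \<Rightarrow> nat" where
  "m_idx n = (LEAST m. n \<le> tri (m + 1))"

definition j_idx :: "nat \<Rightarrow> nat" where
  "j_idx n = n - tri (m_idx n)"

fun Pnodes :: "(nat \<Rightarrow> complex) \<Rightarrow> nat \<Rightarrow> complex poly" where
  "Pnodes \<alpha> 0 = 1"
| "Pnodes \<alpha> (Suc n) = [:- \<alpha> (j_idx (Suc n)), 1:] * Pnodes \<alpha> n"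

end

theory Submission
  imports Defs
begin

text \<open>
  Put c_k = a_k - b_k; the
  partial sums S_N of the series with coefficients c_k tend to 0 uniformly on compact
  sets, and we show c_n = 0 by strong induction on n.

  If c_k = 0 for k < n, then for N > n we have S_N = P_n * G_N, where the cofactor
  polynomial G_N satisfies G_N(w) = c_n at the node w = alpha(j_(n+1)), since every P_k
  with k > n contains the factor (z - w) beyond P_n.  On a circle around w at distance
  at least 1 from the nodes of P_n we have |P_n| >= 1, so |G_N| <= |S_N| there, and the
  maximum modulus principle for polynomials gives |c_n| = |G_N(w)| <= max |S_N| on the
  circle, which tends to 0.
\<close>

fun Pnodes_from :: "(nat \<Rightarrow> complex) \<Rightarrow> nat \<Rightarrow> nat \<Rightarrow> complex poly" where
  "Pnodes_from \<alpha> n 0 = 1"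
| "Pnodes_from \<alpha> n (Suc k) =
     (if Suc k \<le> n then 1 else [:- \<alpha> (j_idx (Suc k)), 1:] * Pnodes_from \<alpha> n k)"

lemma Pnodes_from_le: "k \<le> n \<Longrightarrow> Pnodes_from \<alpha> n k = 1"
  by (induction k) auto

lemma Pnodes_split: "n \<le> k \<Longrightarrow> Pnodes \<alpha> k = Pnodes \<alpha> n * Pnodes_from \<alpha> n k"
proof (induction k)
  case (Suc k)
  then show ?case
    by (cases "Suc k \<le> n") (simp_all add: Pnodes_from_le mult.left_commute)
qed simp

lemma Pnodes_from_root: "n < k \<Longrightarrow> poly (Pnodes_from \<alpha> n k) (\<alpha> (j_idx (Suc n))) = 0"
  by (induction k) (auto simp: less_Suc_eq)

lemma norm_poly_Pnodes_ge_1: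
  assumes "\<And>i. i \<in> {1..n} \<Longrightarrow> 1 \<le> cmod (z - \<alpha> (j_idx i))"
  shows "1 \<le> cmod (poly (Pnodes \<alpha> n) z)"
  using assms
proof (induction n)
  case (Suc n)
  have "1 \<le> cmod (z - \<alpha> (j_idx (Suc n))) * cmod (poly (Pnodes \<alpha> n) z)"
    using Suc by (intro mult_ge1_I) auto
  moreover have "poly (Pnodes \<alpha> (Suc n)) z = (z - \<alpha> (j_idx (Suc n))) * poly (Pnodes \<alpha> n) z"
    by (simp add: algebra_simps)
  ultimately show ?case by (simp only: norm_mult)
qed simp

definition cofactor :: "(nat \<Rightarrow> complex) \<Rightarrow> (nat \<Rightarrow> complex) \<Rightarrow> nat \<Rightarrow> nat \<Rightarrow> complex poly" where
  "cofactor \<alpha> c n N = (\<Sum>k\<in>{n..<N}. smult (c k) (Pnodes_from \<alpha> n k))"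

lemma partial_sum_factor:
  assumes "\<And>k. k < n \<Longrightarrow> c k = 0"
  shows "(\<Sum>k<N. c k * poly (Pnodes \<alpha> k) z) = poly (Pnodes \<alpha> n) z * poly (cofactor \<alpha> c n N) z"
proof -
  have "(\<Sum>k<N. c k * poly (Pnodes \<alpha> k) z) = (\<Sum>k\<in>{n..<N}. c k * poly (Pnodes \<alpha> k) z)"
    using assms by (intro sum.mono_neutral_right) auto
  also have "\<dots> = (\<Sum>k\<in>{n..<N}. poly (Pnodes \<alpha> n) z * (c k * poly (Pnodes_from \<alpha> n k) z))"
  proof (rule sum.cong)
    fix k assume "k \<in> {n..<N}"
    then have "Pnodes \<alpha> k = Pnodes \<alpha> n * Pnodes_from \<alpha> n k"
      by (intro Pnodes_split) simp
    then show "c k * poly (Pnodes \<alpha> k) z = poly (Pnodes \<alpha> n) z * (c k * poly (Pnodes_from \<alpha> n k) z)"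
      by (simp add: algebra_simps)
  qed simp
  also have "\<dots> = poly (Pnodes \<alpha> n) z * poly (cofactor \<alpha> c n N) z"
    by (simp add: cofactor_def poly_sum sum_distrib_left)
  finally show ?thesis .
qed

lemma cofactor_at_node:
  assumes "n < N"
  shows "poly (cofactor \<alpha> c n N) (\<alpha> (j_idx (Suc n))) = c n"
proof -
  have "poly (cofactor \<alpha> c n N) (\<alpha> (j_idx (Suc n)))
      = (\<Sum>k\<in>{n..<N}. c k * poly (Pnodes_from \<alpha> n k) (\<alpha> (j_idx (Suc n))))"
    by (simp add: cofactor_def poly_sum)
  also have "\<dots> = (\<Sum>k\<in>{n}. c k * poly (Pnodes_from \<alpha> n k) (\<alpha> (j_idx (Suc n))))"
    using assms by (intro sum.mono_neutral_right) (auto simp: Pnodes_from_root)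
  finally have "poly (cofactor \<alpha> c n N) (\<alpha> (j_idx (Suc n)))
      = c n * poly (Pnodes_from \<alpha> n n) (\<alpha> (j_idx (Suc n)))" by simp
  then show ?thesis by (simp add: Pnodes_from_le)
qed

lemma sum_roots_unity_power:
  assumes "0 < i" "i < M"
  shows "(\<Sum>j<M. cis (2*pi/M) ^ (i*j)) = 0"
proof -
  define x where "x = cis (2*pi*real i/real M)"
  have M: "M > 0" using assms by simp
  note roots = Complex.bij_betw_roots_unity[OF M]
  have "x \<noteq> 1"
  proof
    assume "x = 1"
    then have "cis (2*pi*real i/real M) = cis (2*pi*real 0/real M)" by (simp add: x_def)
    with bij_betw_imp_inj_on[OF roots] assms have "i = 0"
      by (metis inj_on_def lessThan_iff M)
    with assms show False by simp
  qed
  moreover have "x ^ M = 1"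
    using bij_betw_imp_surj_on[OF roots] assms unfolding x_def by auto
  moreover have "cis (2*pi/M) ^ (i*j) = x ^ j" for j
  proof -
    have "cis (2*pi/M) ^ i = x" unfolding x_def Complex.DeMoivre by (simp add: field_simps)
    then show ?thesis by (simp add: power_mult)
  qed
  ultimately show ?thesis by (simp add: sum_gp_strict)
qed

lemma poly_mean_value:
  fixes p :: "complex poly"
  assumes "degree p < M"
  shows "(\<Sum>j<M. poly p (w + r * cis (2*pi/M) ^ j)) = of_nat M * poly p w"
proof -
  define q where "q = pcompose p [:w, 1:]"
  define u where "u = cis (2*pi/M)"
  have deg_q: "degree q = degree p" by (simp add: q_def degree_pcompose)
  have shift: "poly p (w + z) = poly q z" for z by (simp add: q_def poly_pcompose)
  have monomial: "coeff q i * (r * u ^ j) ^ i = coeff q i * r ^ i * u ^ (i*j)" for i j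
    by (simp add: power_mult_distrib power_mult[symmetric] mult.commute)
  have "(\<Sum>j<M. poly p (w + r * u ^ j))
      = (\<Sum>j<M. \<Sum>i\<le>degree q. coeff q i * r ^ i * u ^ (i*j))"
    unfolding shift poly_altdef[of q] monomial ..
  also have "\<dots> = (\<Sum>i\<le>degree q. coeff q i * r ^ i * (\<Sum>j<M. u ^ (i*j)))"
    by (subst sum.swap) (simp add: sum_distrib_left)
  also have "\<dots> = (\<Sum>i\<in>{0}. coeff q i * r ^ i * (\<Sum>j<M. u ^ (i*j)))"
    using sum_roots_unity_power assms deg_q unfolding u_def
    by (intro sum.mono_neutral_right) auto
  also have "\<dots> = of_nat M * poly p w"
    using shift[of 0] by (simp add: poly_0_coeff_0)
  finally show ?thesis by (simp add: u_def)
qed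

lemma norm_poly_center_le:
  fixes p :: "complex poly"
  assumes "r \<ge> 0" and bound: "\<And>z. z \<in> sphere w r \<Longrightarrow> cmod (poly p z) \<le> B"
  shows "cmod (poly p w) \<le> B"
proof -
  define M where "M = Suc (degree p)"
  define z where "z j = w + of_real r * cis (2*pi/M) ^ j" for j
  have "z j \<in> sphere w r" for j
    using assms(1) by (simp add: z_def dist_norm norm_mult norm_power)
  have "degree p < M" by (simp add: M_def)
  then have "real M * cmod (poly p w) = cmod (\<Sum>j<M. poly p (z j))"
    using poly_mean_value[of p M w "of_real r"] by (simp add: z_def norm_mult)
  also have "\<dots> \<le> (\<Sum>j<M. cmod (poly p (z j)))"
    by (rule norm_sum)
  also have "\<dots> \<le> real M * B"
    using bound \<open>\<And>j. z j \<in> sphere w r\<close> sum_mono[of "{..<M}" "\<lambda>j. cmod (poly p (z j))" "\<lambda>_. B"]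
    by simp
  finally show ?thesis by (simp add: M_def)
qed

lemma uniform_limit_diff_of_equal_series:
  fixes u v :: "nat \<Rightarrow> 'a \<Rightarrow> 'b::real_normed_vector"
  assumes "uniformly_convergent_on K (\<lambda>N z. \<Sum>k<N. u k z)"
    and "uniformly_convergent_on K (\<lambda>N z. \<Sum>k<N. v k z)"
    and eq: "\<And>z. z \<in> K \<Longrightarrow> (\<Sum>k. u k z) = (\<Sum>k. v k z)"
  shows "uniform_limit K (\<lambda>N z. \<Sum>k<N. u k z - v k z) (\<lambda>_. 0) sequentially"
proof -
  obtain lu lv where
    lu: "uniform_limit K (\<lambda>N z. \<Sum>k<N. u k z) lu sequentially" and
    lv: "uniform_limit K (\<lambda>N z. \<Sum>k<N. v k z) lv sequentially"
    using assms(1,2) unfolding uniformly_convergent_on_def by blast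
  have limits_agree: "lu z - lv z = 0" if "z \<in> K" for z
  proof -
    have "(\<lambda>k. u k z) sums lu z" "(\<lambda>k. v k z) sums lv z"
      using tendsto_uniform_limitI[OF lu that] tendsto_uniform_limitI[OF lv that]
      by (simp_all add: sums_def)
    then show ?thesis using eq[OF that] by (simp add: sums_unique[symmetric])
  qed
  have "uniform_limit K (\<lambda>N z. (\<Sum>k<N. u k z) - (\<Sum>k<N. v k z)) (\<lambda>z. lu z - lv z) sequentially"
    using lu lv by (rule uniform_limit_minus)
  then show ?thesis
    unfolding sum_subtractf
    by (rule uniform_limit_cong'[THEN iffD1, rotated 2]) (simp_all add: limits_agree)
qed

lemma coefficient_vanishes:
  fixes c :: "nat \<Rightarrow> complex"
  assumes lower: "\<And>k. k < n \<Longrightarrow> c k = 0"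
    and unif: "\<And>K. compact K \<Longrightarrow>
       uniform_limit K (\<lambda>N z. \<Sum>k<N. c k * poly (Pnodes \<alpha> k) z) (\<lambda>_. 0) sequentially"
  shows "c n = 0"
proof -
  define w where "w = \<alpha> (j_idx (Suc n))"
  define r where "r = 1 + (\<Sum>i\<in>{1..n}. cmod (\<alpha> (j_idx i) - w))"
  have "r > 0" unfolding r_def by (intro add_pos_nonneg sum_nonneg) auto
  have P_large: "1 \<le> cmod (poly (Pnodes \<alpha> n) z)" if z: "z \<in> sphere w r" for z
  proof (rule norm_poly_Pnodes_ge_1)
    fix i assume i: "i \<in> {1..n}"
    have "cmod (\<alpha> (j_idx i) - w) \<le> (\<Sum>i\<in>{1..n}. cmod (\<alpha> (j_idx i) - w))"
      using i by (intro member_le_sum) auto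
    moreover have "cmod (z - w) \<le> cmod (z - \<alpha> (j_idx i)) + cmod (\<alpha> (j_idx i) - w)"
      using norm_triangle_ineq[of "z - \<alpha> (j_idx i)" "\<alpha> (j_idx i) - w"] by simp
    ultimately show "1 \<le> cmod (z - \<alpha> (j_idx i))"
      using z by (simp add: r_def dist_norm norm_minus_commute)
  qed
  have arbitrarily_small: "cmod (c n) \<le> e" if "e > 0" for e
  proof -
    have "\<forall>\<^sub>F N in sequentially. \<forall>z\<in>sphere w r. cmod (\<Sum>k<N. c k * poly (Pnodes \<alpha> k) z) < e"
      using uniform_limitD[OF unif[OF compact_sphere] \<open>e > 0\<close>] by (simp add: dist_norm)
    then obtain N0 where N0: "\<And>N z. N \<ge> N0 \<Longrightarrow> z \<in> sphere w r \<Longrightarrow>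
        cmod (\<Sum>k<N. c k * poly (Pnodes \<alpha> k) z) < e"
      unfolding eventually_sequentially by blast
    define N where "N = max N0 (Suc n)"
    have "n < N" by (simp add: N_def)
    have small: "cmod (\<Sum>k<N. c k * poly (Pnodes \<alpha> k) z) < e" if "z \<in> sphere w r" for z
      using N0[OF _ that] by (simp add: N_def)
    have "cmod (poly (cofactor \<alpha> c n N) z) \<le> e" if "z \<in> sphere w r" for z
    proof -
      have "cmod (poly (cofactor \<alpha> c n N) z)
          \<le> cmod (poly (Pnodes \<alpha> n) z) * cmod (poly (cofactor \<alpha> c n N) z)"
        using P_large[OF that] by (simp add: mult_le_cancel_right1)
      also have "\<dots> < e"
        using small[OF that] by (simp add: partial_sum_factor[OF lower] norm_mult)
      finally show ?thesis by simp
    qed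
    then have "cmod (poly (cofactor \<alpha> c n N) w) \<le> e"
      by (rule norm_poly_center_le[OF less_imp_le[OF \<open>r > 0\<close>]])
    then show ?thesis using cofactor_at_node[OF \<open>n < N\<close>] by (simp add: w_def)
  qed
  have "cmod (c n) \<le> 0"
    by (rule field_le_epsilon) (simp add: arbitrarily_small)
  then show ?thesis by simp
qed

theorem lemma3:
  fixes \<alpha> :: "nat \<Rightarrow> complex" and a b :: "nat \<Rightarrow> complex"
  assumes distinct: "inj_on \<alpha> {1..}"
    and unif_a: "\<And>K. compact K \<Longrightarrow>
       uniformly_convergent_on K (\<lambda>N z. \<Sum>k<N. a k * poly (Pnodes \<alpha> k) z)"
    and unif_b: "\<And>K. compact K \<Longrightarrow>
       uniformly_convergent_on K (\<lambda>N z. \<Sum>k<N. b k * poly (Pnodes \<alpha> k) z)"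
    and eq: "\<And>z. (\<Sum>k. a k * poly (Pnodes \<alpha> k) z) = (\<Sum>k. b k * poly (Pnodes \<alpha> k) z)"
  shows "\<forall>k. a k = b k"
proof -
  define c where "c k = a k - b k" for k
  have diff_zero: "uniform_limit K (\<lambda>N z. \<Sum>k<N. c k * poly (Pnodes \<alpha> k) z) (\<lambda>_. 0) sequentially"
    if "compact K" for K
    using uniform_limit_diff_of_equal_series[OF unif_a[OF that] unif_b[OF that] eq]
    by (simp add: c_def algebra_simps)
  have "c n = 0" for n
  proof (induction n rule: less_induct)
    case (less n)
    then show ?case using diff_zero by (rule coefficient_vanishes)
  qed
  then show ?thesis by (simp add: c_def)
qed

end
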